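(* For any complex numbers $a,b,\alpha,\beta$ with $\beta a-\alpha b\neq0$ and any natural number $n\ge1$, \[ \sum_{r=0}^{\lfloor n/2\rfloor}\Psi\left(\begin{array}{cc|c} a & b & n \\ \alpha & \beta & r \end{array}\right)(-1)^r=\Psi(a+\alpha,b+\beta,n),\qquad \sum_{r=0}^{\lfloor (n-1)/2\rfloor}\Phi\left(\begin{array}{cc|c} a & b & n \\ \alpha & \beta & r \end{array}\right)(-1)^r=\Phi(a+\alpha,b+\beta,n). \]
   Context: $\delta(m)=1$ for $m$ odd, $0$ for $m$ even; $\lfloor\cdot\rfloor$ is the floor. $\Psi(a,b,n)$, $\Phi(a,b,n)$ are defined by $\Psi(a,b,0)=2$, $\Psi(a,b,1)=1$, $\Psi(a,b,n+1)=(2a-b)^{\delta(n)}\Psi(a,b,n)-a\Psi(a,b,n-1)$ and $\Phi(a,b,0)=0$, $\Phi(a,b,1)=1$, $\Phi(a,b,n+1)=(2a-b)^{\delta(n+1)}\Phi(a,b,n)-a\Phi(a,b,n-1)$. For $n\ge1$ and numbers with $\beta a-\alpha b\ne0$, $\Psi\left(\begin{array}{cc|c} a & b & n \\ \alpha & \beta & r \end{array}\right)$ ($0\le r\le\lfloor n/2\rfloor$) and $\Phi\left(\begin{array}{cc|c} a & b & n \\ \alpha & \beta & r \end{array}\right)$ ($0\le r\le\lfloor (n-1)/2\rfloor$) are the unique numbers such that, identically in $x,y$, $(\beta a-\alpha b)^{\lfloor n/2\rfloor}\frac{x^n+y^n}{(x+y)^{\delta(n)}}=\sum_{r}\Psi\left(\begin{array}{cc|c}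 a & b & n \\ \alpha & \beta & r \end{array}\right)(\alpha x^2+\beta xy+\alpha y^2)^{\lfloor n/2\rfloor-r}(ax^2+bxy+ay^2)^r$ and $(\beta a-\alpha b)^{\lfloor (n-1)/2\rfloor}\frac{x^n-y^n}{(x-y)(x+y)^{\delta(n-1)}}=\sum_{r}\Phi\left(\begin{array}{cc|c} a & b & n \\ \alpha & \beta & r \end{array}\right)(\alpha x^2+\beta xy+\alpha y^2)^{\lfloor (n-1)/2\rfloor-r}(ax^2+bxy+ay^2)^r$. *)

theory Defs
  imports Complex_Main
begin

definition delta :: "nat \<Rightarrow> nat" where
  "delta m = (if odd m then 1 else 0)"

fun Psi :: "complex \<Rightarrow> complex \<Rightarrow> nat \<Rightarrow> complex" where
  "Psi a b 0 = 2"
| "Psi a b (Suc 0) = 1"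
| "Psi a b (Suc (Suc m)) =
     (2*a - b) ^ delta (Suc m) * Psi a b (Suc m) - a * Psi a b m"

fun Phi :: "complex \<Rightarrow> complex \<Rightarrow> nat \<Rightarrow> complex" where
  "Phi a b 0 = 0"
| "Phi a b (Suc 0) = 1"
| "Phi a b (Suc (Suc m)) =
     (2*a - b) ^ delta (Suc (Suc m)) * Phi a b (Suc m) - a * Phi a b m"

text \<open>The rational left-hand side is a
  polynomial; the identity is required wherever the denominator is nonzero.\<close>
definition PsiC :: "complex \<Rightarrow> complex \<Rightarrow> complex \<Rightarrow> complex \<Rightarrow> nat \<Rightarrow> nat \<Rightarrow> complex" where
  "PsiC a b al be n = (THE c. (\<forall>r. n div 2 < r \<longrightarrow> c r = 0) \<and>
     (\<forall>x y::complex. (x + y) ^ delta n \<noteq> 0 \<longrightarrow>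
        (be*a - al*b) ^ (n div 2) * ((x^n + y^n) / (x + y) ^ delta n) =
        (\<Sum>r\<le>n div 2. c r * (al*x^2 + be*x*y + al*y^2) ^ (n div 2 - r)
                          * (a*x^2 + b*x*y + a*y^2) ^ r)))"

definition PhiC :: "complex \<Rightarrow> complex \<Rightarrow> complex \<Rightarrow> complex \<Rightarrow> nat \<Rightarrow> nat \<Rightarrow> complex" where
  "PhiC a b al be n = (THE c. (\<forall>r. (n - 1) div 2 < r \<longrightarrow> c r = 0) \<and>
     (\<forall>x y::complex. (x - y) * (x + y) ^ delta (n - 1) \<noteq> 0 \<longrightarrow>
        (be*a - al*b) ^ ((n - 1) div 2) * ((x^n - y^n) / ((x - y) * (x + y) ^ delta (n - 1))) =
        (\<Sum>r\<le>(n - 1) div 2. c r * (al*x^2 + be*x*y + al*y^2) ^ ((n - 1) div 2 - r)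
                          * (a*x^2 + b*x*y + a*y^2) ^ r)))"

end

theory Submission
  imports Defs "HOL-Computational_Algebra.Polynomial"
begin

(* With s = x + y and p = x y, both x^n + y^n and (x^n - y^n) / (x - y) satisfy
   f (n + 2) = s f (n + 1) - p f n; dividing out the right power of s turns this into the
   recurrence of Psi resp. Phi with the parameters s^2 and p in place of 2a - b and a.
   With D = be a - al b, the quantities D s^2 and D p are linear forms in
   U = al x^2 + be x y + al y^2 and V = a x^2 + b x y + a y^2.  So running the recurrence in
   the polynomial ring, with these linear forms written as polynomials in t = V / U, yields
   the coefficients Psi(a b n | al be r) resp. Phi(...) as the coefficients of the result;
   they are unique because U and V are algebraically independent.  The alternating sum of
   the coefficients is the value at t = -1, where the linear forms become 2 (a + al) - (b + be)
   and a + al: the parameters of Psi (a + al) (b + be) and Phi (a + al) (b + be). *)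

abbreviation sym_form :: "'a::comm_ring_1 \<Rightarrow> 'a \<Rightarrow> 'a \<Rightarrow> 'a \<Rightarrow> 'a" where
  "sym_form a b x y \<equiv> a*x^2 + b*x*y + a*y^2"

fun psi_seq :: "'a::comm_ring_1 \<Rightarrow> 'a \<Rightarrow> nat \<Rightarrow> 'a" where
  "psi_seq c p 0 = 2"
| "psi_seq c p (Suc 0) = 1"
| "psi_seq c p (Suc (Suc m)) = c ^ delta (Suc m) * psi_seq c p (Suc m) - p * psi_seq c p m"

fun phi_seq :: "'a::comm_ring_1 \<Rightarrow> 'a \<Rightarrow> nat \<Rightarrow> 'a" where
  "phi_seq c p 0 = 0"
| "phi_seq c p (Suc 0) = 1"
| "phi_seq c p (Suc (Suc m)) = c ^ delta (Suc (Suc m)) * phi_seq c p (Suc m) - p * phi_seq c p m"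

lemma Psi_eq_psi_seq: "Psi a b n = psi_seq (2*a - b) a n"
  by (induction a b n rule: Psi.induct) simp_all

lemma Phi_eq_phi_seq: "Phi a b n = phi_seq (2*a - b) a n"
  by (induction a b n rule: Phi.induct) simp_all

lemma psi_seq_sum_powers:
  fixes d x y :: "'a::comm_ring_1"
  shows "d ^ (n div 2) * (x^n + y^n) = (x + y) ^ delta n * psi_seq (d * (x + y)^2) (d * (x * y)) n"
proof (induction "d * (x + y)^2" "d * (x * y)" n rule: psi_seq.induct)
  case (3 m)
  let ?F = "psi_seq (d * (x + y)^2) (d * (x * y))"
  have rec: "x ^ Suc (Suc m) + y ^ Suc (Suc m)
      = (x + y) * (x ^ Suc m + y ^ Suc m) - x * y * (x ^ m + y ^ m)"
    by (simp add: algebra_simps)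
  consider (even) j where "m = 2 * j" | (odd) j where "m = Suc (2 * j)"
    by (metis evenE oddE Suc_eq_plus1)
  then show ?case
  proof cases
    case even
    then have k: "Suc (Suc m) div 2 = Suc j" "Suc m div 2 = j" "m div 2 = j"
      "delta (Suc (Suc m)) = 0" "delta (Suc m) = 1" "delta m = 0"
      by (simp_all add: delta_def)
    have IH: "d ^ j * (x ^ Suc m + y ^ Suc m) = (x + y) * ?F (Suc m)"
      "d ^ j * (x ^ m + y ^ m) = ?F m"
      using 3 by (simp_all add: k)
    have "d ^ Suc j * (x ^ Suc (Suc m) + y ^ Suc (Suc m))
        = d * (x + y) * (d ^ j * (x ^ Suc m + y ^ Suc m)) - d * (x * y) * (d ^ j * (x ^ m + y ^ m))"
      by (simp add: rec algebra_simps)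
    also have "\<dots> = d * (x + y)^2 * ?F (Suc m) - d * (x * y) * ?F m"
      unfolding IH by (simp add: power2_eq_square)
    finally show ?thesis by (simp add: k)
  next
    case odd
    then have k: "Suc (Suc m) div 2 = Suc j" "Suc m div 2 = Suc j" "m div 2 = j"
      "delta (Suc (Suc m)) = 1" "delta (Suc m) = 0" "delta m = 1"
      by (simp_all add: delta_def)
    have IH: "d ^ Suc j * (x ^ Suc m + y ^ Suc m) = ?F (Suc m)"
      "d ^ j * (x ^ m + y ^ m) = (x + y) * ?F m"
      using 3 by (simp_all add: k)
    have "d ^ Suc j * (x ^ Suc (Suc m) + y ^ Suc (Suc m))
        = (x + y) * (d ^ Suc j * (x ^ Suc m + y ^ Suc m)) - d * (x * y) * (d ^ j * (x ^ m + y ^ m))"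
      by (simp add: rec algebra_simps)
    also have "\<dots> = (x + y) * (?F (Suc m) - d * (x * y) * ?F m)"
      unfolding IH by (simp add: algebra_simps)
    finally show ?thesis by (simp add: k)
  qed
qed (simp_all add: delta_def)

lemma phi_seq_diff_powers:
  fixes d x y :: "'a::comm_ring_1"
  shows "d ^ ((n - 1) div 2) * (x^n - y^n)
    = (x - y) * (x + y) ^ delta (n - 1) * phi_seq (d * (x + y)^2) (d * (x * y)) n"
proof (induction "d * (x + y)^2" "d * (x * y)" n rule: phi_seq.induct)
  case (3 m)
  let ?F = "phi_seq (d * (x + y)^2) (d * (x * y))"
  have rec: "x ^ Suc (Suc m) - y ^ Suc (Suc m)
      = (x + y) * (x ^ Suc m - y ^ Suc m) - x * y * (x ^ m - y ^ m)"
    by (simp add: algebra_simps)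
  consider (zero) "m = 0" | (odd) j where "m = Suc (2 * j)" | (even) j where "m = 2 * Suc j"
    by (metis evenE oddE Suc_eq_plus1 not0_implies_Suc mult_0_right)
  then show ?case
  proof cases
    case zero
    then show ?thesis by (simp add: delta_def power2_eq_square algebra_simps)
  next
    case odd
    then have k: "Suc m div 2 = Suc j" "m div 2 = j" "(m - Suc 0) div 2 = j"
      "delta (Suc (Suc m)) = 1" "delta (Suc m) = 0" "delta m = 1" "delta (m - Suc 0) = 0"
      by (simp_all add: delta_def)
    have IH: "d ^ j * (x ^ Suc m - y ^ Suc m) = (x - y) * (x + y) * ?F (Suc m)"
      "d ^ j * (x ^ m - y ^ m) = (x - y) * ?F m"
      using 3 by (simp_all add: k)
    have "d ^ Suc j * (x ^ Suc (Suc m) - y ^ Suc (Suc m))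
        = d * (x + y) * (d ^ j * (x ^ Suc m - y ^ Suc m)) - d * (x * y) * (d ^ j * (x ^ m - y ^ m))"
      by (simp add: rec algebra_simps)
    also have "\<dots> = (x - y) * (d * (x + y)^2 * ?F (Suc m) - d * (x * y) * ?F m)"
      unfolding IH by (simp add: power2_eq_square algebra_simps)
    finally show ?thesis by (simp add: k)
  next
    case even
    then have k: "Suc m div 2 = Suc j" "m div 2 = Suc j" "(m - Suc 0) div 2 = j"
      "delta (Suc (Suc m)) = 0" "delta (Suc m) = 1" "delta m = 0" "delta (m - Suc 0) = 1"
      by (simp_all add: delta_def)
    have IH: "d ^ Suc j * (x ^ Suc m - y ^ Suc m) = (x - y) * ?F (Suc m)"
      "d ^ j * (x ^ m - y ^ m) = (x - y) * (x + y) * ?F m"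
      using 3 by (simp_all add: k)
    have "d ^ Suc j * (x ^ Suc (Suc m) - y ^ Suc (Suc m))
        = (x + y) * (d ^ Suc j * (x ^ Suc m - y ^ Suc m)) - d * (x * y) * (d ^ j * (x ^ m - y ^ m))"
      by (simp add: rec algebra_simps)
    also have "\<dots> = (x - y) * (x + y) * (?F (Suc m) - d * (x * y) * ?F m)"
      unfolding IH by (simp add: algebra_simps)
    finally show ?thesis by (simp add: k)
  qed
qed (simp_all add: delta_def)

definition poly_form :: "nat \<Rightarrow> 'a::comm_semiring_1 poly \<Rightarrow> 'a \<Rightarrow> 'a \<Rightarrow> 'a" where
  "poly_form k q u v = (\<Sum>r\<le>k. coeff q r * u ^ (k - r) * v ^ r)"

lemma poly_form_diff:
  "poly_form k (p - q) u v = poly_form k p u v - poly_form k (q :: 'a::comm_ring_1 poly) u v"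
  by (simp add: poly_form_def algebra_simps sum_subtractf)

lemma poly_form_mult_linear:
  fixes q :: "'a::comm_semiring_1 poly"
  assumes "degree q \<le> k"
  shows "poly_form (Suc k) ([:l, m:] * q) u v = (l * u + m * v) * poly_form k q u v"
proof -
  have top: "coeff q (Suc k) = 0"
    using assms by (simp add: coeff_eq_0)
  have "poly_form (Suc k) (smult l q) u v = l * u * poly_form k q u v"
  proof -
    have "poly_form (Suc k) (smult l q) u v
        = (\<Sum>r\<le>k. l * coeff q r * u ^ (Suc k - r) * v ^ r)"
      by (simp add: poly_form_def top)
    also have "\<dots> = (\<Sum>r\<le>k. l * u * (coeff q r * u ^ (k - r) * v ^ r))"
      by (rule sum.cong) (auto simp: Suc_diff_le mult_ac)
    finally show ?thesis
      by (simp add: poly_form_def sum_distrib_left)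
  qed
  moreover have "poly_form (Suc k) (pCons 0 (smult m q)) u v = m * v * poly_form k q u v"
    unfolding poly_form_def by (subst sum.atMost_Suc_shift) (simp add: sum_distrib_left mult_ac)
  ultimately show ?thesis
    by (simp add: poly_form_def sum.distrib algebra_simps)
qed

lemma degree_linear_power_mult_le:
  fixes c q :: "'a::comm_semiring_1 poly"
  assumes "degree c \<le> 1" "degree q \<le> k"
  shows "degree (c ^ e * q) \<le> e + k"
proof -
  have "degree (c ^ e) \<le> e"
    using degree_power_le[of c e] assms(1) by (metis le_trans mult_1 mult_le_mono1)
  then show ?thesis
    using degree_mult_le[of "c ^ e" q] assms(2) by linarith
qed

lemma poly_form_mult_linear_power:
  fixes q :: "'a::comm_semiring_1 poly"
  assumes "degree q \<le> k"
  shows "poly_form (e + k) ([:l, m:] ^ e * q) u v = (l * u + m * v) ^ e * poly_form k q u v"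
proof (induction e)
  case (Suc e)
  have deg: "degree ([:l, m:] ^ e * q) \<le> e + k"
    by (rule degree_linear_power_mult_le) (simp_all add: assms)
  have "[:l, m:] ^ Suc e * q = [:l, m:] * ([:l, m:] ^ e * q)"
    by (simp only: power_Suc mult.assoc)
  then show ?case
    using poly_form_mult_linear[OF deg] Suc.IH by (simp add: mult.assoc)
qed simp

lemma degree_psi_seq:
  fixes c p :: "'a::comm_ring_1 poly"
  assumes "degree c \<le> 1" "degree p \<le> 1"
  shows "degree (psi_seq c p n) \<le> n div 2"
  using assms
proof (induction c p n rule: psi_seq.induct)
  case (3 c p m)
  have "delta (Suc m) + Suc m div 2 = Suc (Suc m) div 2" "1 + m div 2 = Suc (Suc m) div 2"
    by (simp_all add: delta_def)
  then have "degree (c ^ delta (Suc m) * psi_seq c p (Suc m)) \<le> Suc (Suc m) div 2"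
    "degree (p ^ 1 * psi_seq c p m) \<le> Suc (Suc m) div 2"
    using degree_linear_power_mult_le[OF "3.prems"(1) "3.IH"(1)[OF "3.prems"]]
      degree_linear_power_mult_le[OF "3.prems"(2) "3.IH"(2)[OF "3.prems"]] by metis+
  then show ?case
    using degree_diff_le by simp
qed simp_all

lemma degree_phi_seq:
  fixes c p :: "'a::comm_ring_1 poly"
  assumes "degree c \<le> 1" "degree p \<le> 1"
  shows "degree (phi_seq c p n) \<le> (n - 1) div 2"
  using assms
proof (induction c p n rule: phi_seq.induct)
  case (3 c p m)
  have "delta (Suc (Suc m)) + (Suc m - 1) div 2 = (Suc (Suc m) - 1) div 2"
    by (simp add: delta_def)
  then have "degree (c ^ delta (Suc (Suc m)) * phi_seq c p (Suc m)) \<le> (Suc (Suc m) - 1) div 2"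
    using degree_linear_power_mult_le[OF "3.prems"(1) "3.IH"(1)[OF "3.prems"]] by metis
  moreover have "degree (p * phi_seq c p m) \<le> (Suc (Suc m) - 1) div 2"
  proof (cases m)
    case (Suc i)
    then have "1 + (m - 1) div 2 = (Suc (Suc m) - 1) div 2"
      by simp
    then show ?thesis
      using degree_linear_power_mult_le[OF "3.prems"(2) "3.IH"(2)[OF "3.prems"], of 1] by simp
  qed simp
  ultimately show ?case
    using degree_diff_le by simp
qed simp_all

lemma poly_form_psi_seq:
  "poly_form (n div 2) (psi_seq [:c0, c1:] [:p0, p1:] n) u v
    = psi_seq (c0 * u + c1 * v) (p0 * u + p1 * v) (n :: nat)"
proof (induction "[:c0, c1:]" "[:p0, p1:]" n rule: psi_seq.induct)
  case (3 m)
  let ?q = "psi_seq [:c0, c1:] [:p0, p1:]"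
  have deg: "degree (?q (Suc m)) \<le> Suc m div 2" "degree (?q m) \<le> m div 2"
    by (rule degree_psi_seq; simp)+
  have k: "Suc (Suc m) div 2 = delta (Suc m) + Suc m div 2" "Suc (Suc m) div 2 = Suc (m div 2)"
    by (simp_all add: delta_def)
  have "poly_form (Suc (Suc m) div 2) ([:c0, c1:] ^ delta (Suc m) * ?q (Suc m)) u v
      = (c0 * u + c1 * v) ^ delta (Suc m) * poly_form (Suc m div 2) (?q (Suc m)) u v"
    unfolding k(1) by (rule poly_form_mult_linear_power[OF deg(1)])
  moreover have "poly_form (Suc (Suc m) div 2) ([:p0, p1:] * ?q m) u v
      = (p0 * u + p1 * v) * poly_form (m div 2) (?q m) u v"
    unfolding k(2) by (rule poly_form_mult_linear[OF deg(2)])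
  ultimately show ?case
    using 3 by (simp only: psi_seq.simps poly_form_diff)
qed (simp_all add: poly_form_def numeral_poly)

lemma poly_form_phi_seq:
  "poly_form ((n - 1) div 2) (phi_seq [:c0, c1:] [:p0, p1:] n) u v
    = phi_seq (c0 * u + c1 * v) (p0 * u + p1 * v) (n :: nat)"
proof (induction "[:c0, c1:]" "[:p0, p1:]" n rule: phi_seq.induct)
  case (3 m)
  let ?q = "phi_seq [:c0, c1:] [:p0, p1:]"
  have deg: "degree (?q (Suc m)) \<le> (Suc m - 1) div 2" "degree (?q m) \<le> (m - 1) div 2"
    by (rule degree_phi_seq; simp)+
  have "(Suc (Suc m) - 1) div 2 = delta (Suc (Suc m)) + (Suc m - 1) div 2"
    by (simp add: delta_def)
  then have "poly_form ((Suc (Suc m) - 1) div 2) ([:c0, c1:] ^ delta (Suc (Suc m)) * ?q (Suc m)) u v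
      = (c0 * u + c1 * v) ^ delta (Suc (Suc m)) * poly_form ((Suc m - 1) div 2) (?q (Suc m)) u v"
    by (simp only: poly_form_mult_linear_power[OF deg(1)])
  moreover have "poly_form ((Suc (Suc m) - 1) div 2) ([:p0, p1:] * ?q m) u v
      = (p0 * u + p1 * v) * poly_form ((m - 1) div 2) (?q m) u v"
  proof (cases m)
    case (Suc i)
    then have "(Suc (Suc m) - 1) div 2 = Suc ((m - 1) div 2)"
      by simp
    then show ?thesis
      by (simp only: poly_form_mult_linear[OF deg(2)])
  qed (simp add: poly_form_def)
  ultimately show ?case
    using 3 by (simp only: phi_seq.simps poly_form_diff)
qed (simp_all add: poly_form_def)

lemma sym_form_linear_combinations:
  fixes a b al be x y :: "'a::comm_ring_1"
  shows "(2*a - b) * sym_form al be x y + (be - 2*al) * sym_form a b x y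
      = (be*a - al*b) * (x + y)^2"
    and "a * sym_form al be x y + - al * sym_form a b x y = (be*a - al*b) * (x * y)"
  by (simp_all add: power2_eq_square algebra_simps)

lemma sym_forms_surj:
  fixes a b al be u v :: complex
  assumes D: "be*a - al*b \<noteq> 0"
    and C: "(2*a - b) * u + (be - 2*al) * v \<noteq> 0"
    and W: "(-2*a - b) * u + (be + 2*al) * v \<noteq> 0"
  obtains x y where "x + y \<noteq> 0" "x - y \<noteq> 0" "sym_form al be x y = u" "sym_form a b x y = v"
proof -
  define d where "d = be*a - al*b"
  \<comment> \<open>s = x + y and w = x - y; their squares are dictated by sym_form_linear_combinations\<close>
  define s where "s = csqrt (((2*a - b) * u + (be - 2*al) * v) / d)"
  define w where "w = csqrt (((-2*a - b) * u + (be + 2*al) * v) / d)"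
  define x where "x = (s + w) / 2"
  define y where "y = (s - w) / 2"
  have s2: "d * s^2 = (2*a - b) * u + (be - 2*al) * v"
    and w2: "d * w^2 = (-2*a - b) * u + (be + 2*al) * v"
    using D by (simp_all add: s_def w_def d_def)
  have "x + y = s" "x - y = w"
    by (simp_all add: x_def y_def field_simps)
  moreover have "s \<noteq> 0" "w \<noteq> 0"
    using s2 w2 C W by auto
  moreover have "4 * d * sym_form al be x y = 2*al * (d*s^2 + d*w^2) + be * (d*s^2 - d*w^2)"
    "4 * d * sym_form a b x y = 2*a * (d*s^2 + d*w^2) + b * (d*s^2 - d*w^2)"
    by (simp_all add: x_def y_def field_simps power2_eq_square)
  then have "4 * d * sym_form al be x y = 4 * d * u" "4 * d * sym_form a b x y = 4 * d * v"
    unfolding s2 w2 by (simp_all add: d_def algebra_simps)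
  ultimately show ?thesis
    using D by (intro that) (auto simp: d_def)
qed

lemma binary_form_coeff_eq_0:
  fixes e :: "nat \<Rightarrow> 'a::{idom, ring_char_0}"
  assumes l: "(l0, l1) \<noteq> (0, 0)" and m: "(m0, m1) \<noteq> (0, 0)"
    and vanish: "\<And>u v. l0 * u + l1 * v \<noteq> 0 \<Longrightarrow> m0 * u + m1 * v \<noteq> 0 \<Longrightarrow>
      (\<Sum>r\<le>k. e r * u ^ (k - r) * v ^ r) = 0"
    and "r \<le> k"
  shows "e r = 0"
proof -
  define E where "E = (\<Sum>r\<le>k. monom (e r) r)"
  have "poly ([:l0, l1:] * [:m0, m1:] * E) t = 0" for t
  proof -
    have "poly E t = (\<Sum>r\<le>k. e r * 1 ^ (k - r) * t ^ r)"
      by (simp add: E_def poly_sum poly_monom)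
    then have "(l0 + l1 * t) * (m0 + m1 * t) * poly E t = 0"
      using vanish[of 1 t] by (auto simp: mult.commute)
    then show ?thesis
      by (simp add: algebra_simps)
  qed
  then have "[:l0, l1:] * [:m0, m1:] * E = 0"
    using poly_all_0_iff_0 by blast
  moreover have "[:l0, l1:] \<noteq> 0" "[:m0, m1:] \<noteq> 0"
    using l m by auto
  ultimately have "E = 0"
    by (metis mult_eq_0_iff)
  moreover have "coeff E r = e r"
    using \<open>r \<le> k\<close> by (simp add: E_def coeff_sum coeff_monom)
  ultimately show ?thesis
    by simp
qed

lemma sym_forms_algebraically_independent:
  fixes a b al be :: complex and e :: "nat \<Rightarrow> complex"
  assumes D: "be*a - al*b \<noteq> 0"
    and vanish: "\<And>x y. x + y \<noteq> 0 \<Longrightarrow> x - y \<noteq> 0 \<Longrightarrow>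
      (\<Sum>r\<le>k. e r * sym_form al be x y ^ (k - r) * sym_form a b x y ^ r) = 0"
    and "r \<le> k"
  shows "e r = 0"
proof (rule binary_form_coeff_eq_0[of "2*a - b" "be - 2*al" "-2*a - b" "be + 2*al"])
  have "be*a - al*b = a * (be - 2*al) + al * (2*a - b)"
    "be*a - al*b = a * (be + 2*al) + al * (-2*a - b)"
    by (simp_all add: algebra_simps)
  then show "(2*a - b, be - 2*al) \<noteq> (0, 0)" "(-2*a - b, be + 2*al) \<noteq> (0, 0)"
    using D by auto
next
  fix u v :: complex
  assume "(2*a - b) * u + (be - 2*al) * v \<noteq> 0" "(-2*a - b) * u + (be + 2*al) * v \<noteq> 0"
  with D obtain x y
    where "x + y \<noteq> 0" "x - y \<noteq> 0" "sym_form al be x y = u" "sym_form a b x y = v"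
    by (rule sym_forms_surj)
  then show "(\<Sum>r\<le>k. e r * u ^ (k - r) * v ^ r) = 0"
    using vanish by blast
qed fact

lemma the_sym_form_coefficients:
  fixes F :: "complex \<Rightarrow> complex \<Rightarrow> complex" and P :: "complex \<Rightarrow> complex \<Rightarrow> bool"
  assumes D: "be*a - al*b \<noteq> 0" and deg: "degree q \<le> k"
    and P: "\<And>x y. x + y \<noteq> 0 \<Longrightarrow> x - y \<noteq> 0 \<Longrightarrow> P x y"
    and F: "\<And>x y. P x y \<Longrightarrow> F x y = poly_form k q (sym_form al be x y) (sym_form a b x y)"
  shows "(THE c. (\<forall>r. k < r \<longrightarrow> c r = 0) \<and> (\<forall>x y. P x y \<longrightarrow>
      F x y = (\<Sum>r\<le>k. c r * sym_form al be x y ^ (k - r) * sym_form a b x y ^ r))) = coeff q"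
proof (rule the_equality)
  show "(\<forall>r. k < r \<longrightarrow> coeff q r = 0) \<and> (\<forall>x y. P x y \<longrightarrow>
      F x y = (\<Sum>r\<le>k. coeff q r * sym_form al be x y ^ (k - r) * sym_form a b x y ^ r))"
    using deg F by (auto simp: coeff_eq_0 poly_form_def)
next
  fix c
  assume c: "(\<forall>r. k < r \<longrightarrow> c r = 0) \<and> (\<forall>x y. P x y \<longrightarrow>
      F x y = (\<Sum>r\<le>k. c r * sym_form al be x y ^ (k - r) * sym_form a b x y ^ r))"
  show "c = coeff q"
  proof
    fix r
    show "c r = coeff q r"
    proof (cases "r \<le> k")
      case True
      have "c r - coeff q r = 0"
      proof (rule sym_forms_algebraically_independent[OF D _ True])
        fix x y :: complex
        assume "x + y \<noteq> 0" "x - y \<noteq> 0"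
        then have "P x y"
          by (rule P)
        then show "(\<Sum>r\<le>k. (c r - coeff q r) * sym_form al be x y ^ (k - r)
            * sym_form a b x y ^ r) = 0"
          using c F[of x y] by (simp add: poly_form_def left_diff_distrib sum_subtractf)
      qed
      then show ?thesis
        by simp
    qed (use c deg in \<open>simp add: coeff_eq_0\<close>)
  qed
qed

lemma PsiC_eq_coeff:
  assumes D: "be*a - al*b \<noteq> 0"
  shows "PsiC a b al be n = coeff (psi_seq [:2*a - b, be - 2*al:] [:a, -al:] n)"
  unfolding PsiC_def
proof (rule the_sym_form_coefficients[OF D degree_psi_seq])
  fix x y :: complex
  assume "(x + y) ^ delta n \<noteq> 0"
  then have "(be*a - al*b) ^ (n div 2) * ((x^n + y^n) / (x + y) ^ delta n)
      = psi_seq ((be*a - al*b) * (x + y)^2) ((be*a - al*b) * (x * y)) n"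
    unfolding times_divide_eq_right psi_seq_sum_powers by simp
  also have "\<dots> = poly_form (n div 2) (psi_seq [:2*a - b, be - 2*al:] [:a, -al:] n)
      (sym_form al be x y) (sym_form a b x y)"
    by (simp only: poly_form_psi_seq sym_form_linear_combinations)
  finally show "(be*a - al*b) ^ (n div 2) * ((x^n + y^n) / (x + y) ^ delta n)
      = poly_form (n div 2) (psi_seq [:2*a - b, be - 2*al:] [:a, -al:] n)
          (sym_form al be x y) (sym_form a b x y)" .
qed simp_all

lemma PhiC_eq_coeff:
  assumes D: "be*a - al*b \<noteq> 0"
  shows "PhiC a b al be n = coeff (phi_seq [:2*a - b, be - 2*al:] [:a, -al:] n)"
  unfolding PhiC_def
proof (rule the_sym_form_coefficients[OF D degree_phi_seq])
  fix x y :: complex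
  assume "(x - y) * (x + y) ^ delta (n - 1) \<noteq> 0"
  then have "(be*a - al*b) ^ ((n - 1) div 2) * ((x^n - y^n) / ((x - y) * (x + y) ^ delta (n - 1)))
      = phi_seq ((be*a - al*b) * (x + y)^2) ((be*a - al*b) * (x * y)) n"
    unfolding times_divide_eq_right phi_seq_diff_powers by simp
  also have "\<dots> = poly_form ((n - 1) div 2) (phi_seq [:2*a - b, be - 2*al:] [:a, -al:] n)
      (sym_form al be x y) (sym_form a b x y)"
    by (simp only: poly_form_phi_seq sym_form_linear_combinations)
  finally show "(be*a - al*b) ^ ((n - 1) div 2) * ((x^n - y^n) / ((x - y) * (x + y) ^ delta (n - 1)))
      = poly_form ((n - 1) div 2) (phi_seq [:2*a - b, be - 2*al:] [:a, -al:] n)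
          (sym_form al be x y) (sym_form a b x y)" .
qed simp_all

theorem theorem10p4:
  fixes a b al be :: complex and n :: nat
  assumes "be*a - al*b \<noteq> 0" and "n \<ge> 1"
  shows "(\<Sum>r\<le>n div 2. PsiC a b al be n r * (-1) ^ r) = Psi (a + al) (b + be) n \<and>
         (\<Sum>r\<le>(n - 1) div 2. PhiC a b al be n r * (-1) ^ r) = Phi (a + al) (b + be) n"
proof
  let ?C = "[:2*a - b, be - 2*al:]" and ?P = "[:a, -al:]"
  have "(\<Sum>r\<le>n div 2. PsiC a b al be n r * (-1) ^ r)
      = poly_form (n div 2) (psi_seq ?C ?P n) 1 (-1)"
    by (simp add: PsiC_eq_coeff[OF assms(1)] poly_form_def)
  also have "\<dots> = psi_seq ((2*a - b) * 1 + (be - 2*al) * -1) (a * 1 + - al * -1) n"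
    by (rule poly_form_psi_seq)
  also have "\<dots> = Psi (a + al) (b + be) n"
    by (simp add: Psi_eq_psi_seq algebra_simps)
  finally show "(\<Sum>r\<le>n div 2. PsiC a b al be n r * (-1) ^ r) = Psi (a + al) (b + be) n" .
  have "(\<Sum>r\<le>(n - 1) div 2. PhiC a b al be n r * (-1) ^ r)
      = poly_form ((n - 1) div 2) (phi_seq ?C ?P n) 1 (-1)"
    by (simp add: PhiC_eq_coeff[OF assms(1)] poly_form_def)
  also have "\<dots> = phi_seq ((2*a - b) * 1 + (be - 2*al) * -1) (a * 1 + - al * -1) n"
    by (rule poly_form_phi_seq)
  also have "\<dots> = Phi (a + al) (b + be) n"
    by (simp add: Phi_eq_phi_seq algebra_simps)
  finally show "(\<Sum>r\<le>(n - 1) div 2. PhiC a b al be n r * (-1) ^ r) = Phi (a + al) (b + be) n" .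
qed

end
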